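(* Let $d\ge1$, $p>1$, $s\in(0,1)$, and $\alpha_1,\alpha_2\in\mathbb{R}$ with $\alpha=\alpha_1+\alpha_2$, $\alpha_1p,\alpha_2p\in(-d,sp)$, $0\le\alpha p<sp$ and $sp-\alpha p<d$. Let $p<q<\frac{p(d-s+\alpha)}{d-sp+\alpha p}$, set $r=p\frac{q-1}{p-1}$ and \[ a=\frac{d(q-p)}{(q-1)\big(dp-(d-sp+\alpha p)q\big)}, \] where $\delta_\alpha:=dp-(d-sp+\alpha p)q>0$. Let $\mathcal{C}_\alpha>0$ be the weighted fractional Sobolev constant described in the context. Then for all $u\in\mathcal{D}^{p,q}_{s,\alpha}$, \[ \|u\|_{L^r(\mathbb{R}^d)}\le\mathcal{C}_\alpha^{a/p}\,[u]_{W^{s,p,\alpha}(\mathbb{R}^d)}^a\,\|u\|_{L^q(\mathbb{R}^d)}^{1-a}. \]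
   Context: The weighted Gagliardo seminorm is $[u]_{W^{s,p,\alpha}(\mathbb{R}^d)}^p=\int_{\mathbb{R}^d}\int_{\mathbb{R}^d}\frac{|u(x)-u(y)|^p}{|x-y|^{d+sp}}|x|^{\alpha_1p}|y|^{\alpha_2p}dx\,dy$; $W^{s,p,\alpha}(\mathbb{R}^d)$ is the closure of $C^1_c(\mathbb{R}^d)$ with respect to the norm $(\|u\|_{L^p(\mathbb{R}^d)}^p+[u]_{W^{s,p,\alpha}(\mathbb{R}^d)}^p)^{1/p}$; and $\mathcal{D}^{p,q}_{s,\alpha}=(W^{s,p,\alpha}(\mathbb{R}^d)\cap L^q(\mathbb{R}^d))\setminus\{0\}$. $\mathcal{C}_\alpha=\mathcal{C}_\alpha(d,p,s,\alpha_1,\alpha_2)>0$ is a constant such that, with $p^*_{s,\alpha}=\frac{dp}{d-sp+\alpha p}$, the weighted fractional Sobolev inequality $\|u\|_{L^{p^*_{s,\alpha}}(\mathbb{R}^d)}\le\mathcal{C}_\alpha^{1/p}[u]_{W^{s,p,\alpha}(\mathbb{R}^d)}$ holds for all $u\in W^{s,p,\alpha}(\mathbb{R}^d)$ (such a constant exists under the stated hypotheses by a fractional Caffarelli–Kohn–Nirenberg inequality of Nguyen and Squassina). *)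

theory Defs
  imports "HOL-Analysis.Analysis"
begin

text \<open>Functions on R^d are modelled as u :: 'a \<Rightarrow> real with 'a a Euclidean space,
  d = DIM('a). Integrals are Lebesgue (nonnegative, extended-valued) integrals w.r.t. lborel.\<close>

definition Lp_int :: "real \<Rightarrow> ('a::euclidean_space \<Rightarrow> real) \<Rightarrow> ennreal" where
  "Lp_int q u = (\<integral>\<^sup>+ x. ennreal (\<bar>u x\<bar> powr q) \<partial>lborel)"

definition in_Lp :: "real \<Rightarrow> ('a::euclidean_space \<Rightarrow> real) \<Rightarrow> bool" where
  "in_Lp q u \<longleftrightarrow> u \<in> borel_measurable lborel \<and> Lp_int q u < \<infinity>"

definition Lp_norm :: "real \<Rightarrow> ('a::euclidean_space \<Rightarrow> real) \<Rightarrow> real" where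
  "Lp_norm q u = enn2real (Lp_int q u) powr (1 / q)"

definition gagliardo_int ::
  "real \<Rightarrow> real \<Rightarrow> real \<Rightarrow> real \<Rightarrow> ('a::euclidean_space \<Rightarrow> real) \<Rightarrow> ennreal" where
  "gagliardo_int s p \<alpha>1 \<alpha>2 u =
     (\<integral>\<^sup>+ x. \<integral>\<^sup>+ y. ennreal (\<bar>u x - u y\<bar> powr p / norm (x - y) powr (real DIM('a) + s * p)
        * norm x powr (\<alpha>1 * p) * norm y powr (\<alpha>2 * p)) \<partial>lborel \<partial>lborel)"

definition gagliardo_seminorm ::
  "real \<Rightarrow> real \<Rightarrow> real \<Rightarrow> real \<Rightarrow> ('a::euclidean_space \<Rightarrow> real) \<Rightarrow> real" where
  "gagliardo_seminorm s p \<alpha>1 \<alpha>2 u = enn2real (gagliardo_int s p \<alpha>1 \<alpha>2 u) powr (1 / p)"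

definition C1c :: "('a::euclidean_space \<Rightarrow> real) \<Rightarrow> bool" where
  "C1c \<phi> \<longleftrightarrow> (\<forall>x. \<phi> differentiable (at x))
     \<and> (\<forall>i\<in>Basis. continuous_on UNIV (\<lambda>x. frechet_derivative \<phi> (at x) i))
     \<and> compact (closure {x. \<phi> x \<noteq> 0})"

text \<open>W^{s,p,alpha}: closure of C^1_c w.r.t. the norm (||u||_p^p + [u]^p)^(1/p), realised
  inside the measurable functions of finite norm.\<close>
definition W_space :: "real \<Rightarrow> real \<Rightarrow> real \<Rightarrow> real \<Rightarrow> ('a::euclidean_space \<Rightarrow> real) set" where
  "W_space s p \<alpha>1 \<alpha>2 = {u. u \<in> borel_measurable lborel
      \<and> Lp_int p u < \<infinity> \<and> gagliardo_int s p \<alpha>1 \<alpha>2 u < \<infinity>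
      \<and> (\<exists>\<phi>::nat \<Rightarrow> 'a \<Rightarrow> real. (\<forall>k. C1c (\<phi> k)) \<and>
          ((\<lambda>k. Lp_int p (\<lambda>x. u x - \<phi> k x) + gagliardo_int s p \<alpha>1 \<alpha>2 (\<lambda>x. u x - \<phi> k x))
             \<longlongrightarrow> 0) sequentially)}"

definition D_space :: "real \<Rightarrow> real \<Rightarrow> real \<Rightarrow> real \<Rightarrow> real \<Rightarrow> ('a::euclidean_space \<Rightarrow> real) set" where
  "D_space s p q \<alpha>1 \<alpha>2 = {u. u \<in> W_space s p \<alpha>1 \<alpha>2 \<and> in_Lp q u \<and> \<not> (AE x in lborel. u x = 0)}"

end

theory Submission
  imports Defs
begin

text \<open>With \<open>p* = dp/(d - sp + \<alpha>p)\<close> the weighted Sobolev exponent, the exponents satisfy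
  \<open>1/r = (1 - a)/q + a/p*\<close> with \<open>0 < a < 1\<close>. Interpolation between \<open>L^q\<close> and \<open>L^p*\<close>
  (log-convexity of \<open>t \<mapsto> \<integral>|u|^t\<close>, which follows pointwise from the weighted Young inequality once
  both integrals are normalised to 1) gives \<open>\<parallel>u\<parallel>_r \<le> \<parallel>u\<parallel>_q^(1-a) \<parallel>u\<parallel>_p*^a\<close>, and the Sobolev
  inequality bounds \<open>\<parallel>u\<parallel>_p*\<close> by \<open>C^(1/p) [u]\<close>.\<close>

text \<open>No sign conditions on the exponents \<open>q\<close>, \<open>P\<close> are needed below, because \<open>0 powr e = 0\<close>
  for every \<open>e\<close>.\<close>

lemma powr_interpolation_le:
  fixes x A B q P \<theta> :: real
  assumes "0 \<le> x" "0 < A" "0 < B" "0 \<le> \<theta>" "\<theta> \<le> 1"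
  shows "x powr ((1 - \<theta>) * q + \<theta> * P)
           \<le> A powr (1 - \<theta>) * B powr \<theta> * ((1 - \<theta>) * x powr q / A + \<theta> * x powr P / B)"
proof (cases "x = 0")
  case False
  with assms have "x > 0" by simp
  then have "x powr ((1 - \<theta>) * q + \<theta> * P)
      = (x powr q / A) powr (1 - \<theta>) * (x powr P / B) powr \<theta> * (A powr (1 - \<theta>) * B powr \<theta>)"
    using assms by (simp add: powr_add powr_powr powr_divide mult.commute mult.left_commute divide_simps)
  also have "\<dots> \<le> ((1 - \<theta>) * (x powr q / A) + \<theta> * (x powr P / B)) * (A powr (1 - \<theta>) * B powr \<theta>)"
    using assms \<open>x > 0\<close> by (intro mult_right_mono Youngs_inequality_0) auto
  finally show ?thesis by (simp add: algebra_simps)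
qed simp

lemma nn_integral_powr_interpolation:
  fixes g :: "'b \<Rightarrow> real"
  assumes g: "g \<in> borel_measurable M" "\<And>x. 0 \<le> g x"
    and \<theta>: "0 \<le> \<theta>" "\<theta> \<le> 1"
    and A: "(\<integral>\<^sup>+x. g x powr q \<partial>M) = ennreal A" "0 \<le> A"
    and B: "(\<integral>\<^sup>+x. g x powr P \<partial>M) = ennreal B" "0 \<le> B"
  shows "(\<integral>\<^sup>+x. g x powr ((1 - \<theta>) * q + \<theta> * P) \<partial>M) \<le> A powr (1 - \<theta>) * B powr \<theta>"
proof (cases "A = 0 \<or> B = 0")
  case True
  have "AE x in M. g x = 0"
  proof -
    obtain e where "(\<integral>\<^sup>+x. g x powr e \<partial>M) = 0"
      using True A B by auto
    then have "AE x in M. ennreal (g x powr e) = 0"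
      using g by (simp add: nn_integral_0_iff_AE)
    then show ?thesis by eventually_elim simp
  qed
  then have "(\<integral>\<^sup>+x. g x powr ((1 - \<theta>) * q + \<theta> * P) \<partial>M) = 0"
    using g by (subst nn_integral_0_iff_AE) (auto elim!: eventually_mono)
  then show ?thesis by simp
next
  case False
  with A B have "0 < A" "0 < B" by auto
  let ?K = "A powr (1 - \<theta>) * B powr \<theta>"
  have "(\<integral>\<^sup>+x. g x powr ((1 - \<theta>) * q + \<theta> * P) \<partial>M)
      \<le> (\<integral>\<^sup>+x. ennreal (?K * (1 - \<theta>) / A) * g x powr q + ennreal (?K * \<theta> / B) * g x powr P \<partial>M)"
  proof (rule nn_integral_mono)
    fix x
    have "g x powr ((1 - \<theta>) * q + \<theta> * P) \<le> ?K * (1 - \<theta>) / A * g x powr q + ?K * \<theta> / B * g x powr P"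
      using powr_interpolation_le[of "g x" A B \<theta> q P] g \<theta> \<open>0 < A\<close> \<open>0 < B\<close>
      by (simp add: algebra_simps)
    then show "ennreal (g x powr ((1 - \<theta>) * q + \<theta> * P))
        \<le> ennreal (?K * (1 - \<theta>) / A) * g x powr q + ennreal (?K * \<theta> / B) * g x powr P"
      using \<theta> \<open>0 < A\<close> \<open>0 < B\<close>
      by (simp add: ennreal_mult[symmetric] ennreal_plus[symmetric] del: ennreal_plus)
  qed
  also have "\<dots> = ennreal (?K * (1 - \<theta>) / A) * A + ennreal (?K * \<theta> / B) * B"
    using g by (simp add: nn_integral_add nn_integral_cmult A B)
  also have "\<dots> = ennreal (?K * (1 - \<theta>) / A * A + ?K * \<theta> / B * B)"
    using \<theta> \<open>0 < A\<close> \<open>0 < B\<close>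
    by (simp add: ennreal_mult[symmetric] ennreal_plus[symmetric] del: ennreal_plus)
  also have "?K * (1 - \<theta>) / A * A + ?K * \<theta> / B * B = ?K"
    using \<open>0 < A\<close> \<open>0 < B\<close> by (simp add: field_simps)
  finally show ?thesis .
qed

lemma Lp_norm_interpolation:
  fixes u :: "'a::euclidean_space \<Rightarrow> real"
  assumes u: "u \<in> borel_measurable lborel"
    and pos: "0 < q" "0 < P" "0 \<le> \<theta>" "\<theta> \<le> 1"
    and r: "1 / r = (1 - \<theta>) / q + \<theta> / P"
    and fin: "Lp_int q u < \<infinity>" "Lp_int P u < \<infinity>"
  shows "Lp_int r u < \<infinity>" "Lp_norm r u \<le> Lp_norm q u powr (1 - \<theta>) * Lp_norm P u powr \<theta>"
proof -
  have "0 < 1 / r"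
    unfolding r using pos by (cases "\<theta> = 0") (auto intro: add_nonneg_pos add_pos_nonneg)
  then have "0 < r" by simp
  define t where "t = \<theta> * r / P"
  have t: "1 - t = (1 - \<theta>) * r / q"
    unfolding t_def using r pos \<open>0 < r\<close> by (simp add: field_simps)
  have "0 \<le> t"
    unfolding t_def using pos \<open>0 < r\<close> by simp
  have "0 \<le> 1 - t"
    unfolding t using pos \<open>0 < r\<close> by (intro divide_nonneg_pos mult_nonneg_nonneg) auto
  have exponent: "(1 - t) * q + t * P = r"
    unfolding t using pos \<open>0 < r\<close> by (simp add: t_def field_simps)
  define A where "A = enn2real (Lp_int q u)"
  define B where "B = enn2real (Lp_int P u)"
  have "A \<ge> 0" "B \<ge> 0" "Lp_norm q u = A powr (1 / q)" "Lp_norm P u = B powr (1 / P)"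
    unfolding A_def B_def Lp_norm_def by auto
  have bound: "Lp_int r u \<le> A powr (1 - t) * B powr t"
    unfolding Lp_int_def exponent[symmetric]
    using fin \<open>0 \<le> t\<close> \<open>0 \<le> 1 - t\<close> u
    by (intro nn_integral_powr_interpolation) (auto simp: A_def B_def Lp_int_def less_top)
  then show "Lp_int r u < \<infinity>"
    by (simp add: le_less_trans)
  have exponents: "(1 - t) * (1 / r) = 1 / q * (1 - \<theta>)" "t * (1 / r) = 1 / P * \<theta>"
    unfolding t unfolding t_def using \<open>0 < r\<close> by simp_all
  have "Lp_norm r u \<le> (A powr (1 - t) * B powr t) powr (1 / r)"
    unfolding Lp_norm_def using bound \<open>0 < r\<close> by (intro powr_mono2) (auto simp: enn2real_leI)
  also have "\<dots> = A powr ((1 - t) * (1 / r)) * B powr (t * (1 / r))"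
    using \<open>A \<ge> 0\<close> \<open>B \<ge> 0\<close> by (simp add: powr_mult powr_powr)
  also have "\<dots> = (A powr (1 / q)) powr (1 - \<theta>) * (B powr (1 / P)) powr \<theta>"
    using exponents by (simp only: powr_powr)
  finally show "Lp_norm r u \<le> Lp_norm q u powr (1 - \<theta>) * Lp_norm P u powr \<theta>"
    using \<open>Lp_norm q u = _\<close> \<open>Lp_norm P u = _\<close> by simp
qed

lemma sobolev_interpolation_exponent:
  fixes d p q N :: real
  assumes p: "1 < p" "p < q" and N: "0 < N" "N < d" and q: "q * N < d * (p - 1) + N"
  defines "a \<equiv> d * (q - p) / ((q - 1) * (d * p - N * q))"
  shows "0 < a" "a < 1" "1 / (p * (q - 1) / (p - 1)) = (1 - a) / q + a / (d * p / N)"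
proof -
  define \<delta> where "\<delta> = d * p - N * q"
  define E where "E = d * (p - 1) + N - q * N"
  have "0 < E" "0 < q - 1" "0 < p - 1"
    using p q unfolding E_def by auto
  moreover have "\<delta> = E + (d - N)"
    unfolding \<delta>_def E_def by (simp add: algebra_simps)
  ultimately have "0 < \<delta>" using N by simp
  have a: "a = d * (q - p) / ((q - 1) * \<delta>)"
    unfolding a_def \<delta>_def ..
  have "(q - 1) * \<delta> - d * (q - p) = q * E"
    unfolding \<delta>_def E_def by (simp add: algebra_simps)
  then have one_minus_a: "1 - a = q * E / ((q - 1) * \<delta>)"
    unfolding a using \<open>0 < \<delta>\<close> \<open>0 < q - 1\<close> by (simp add: diff_divide_eq_iff)
  show "0 < a"
    unfolding a using p N \<open>0 < \<delta>\<close> \<open>0 < q - 1\<close> by simp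
  have "0 < 1 - a"
    unfolding one_minus_a using p \<open>0 < E\<close> \<open>0 < \<delta>\<close> \<open>0 < q - 1\<close> by simp
  then show "a < 1" by simp
  have "(1 - a) / q = p * E / (p * (q - 1) * \<delta>)"
    unfolding one_minus_a using p by simp
  moreover have "a / (d * p / N) = (q - p) * N / (p * (q - 1) * \<delta>)"
  proof -
    have "0 < d" using N by simp
    then have "a / (d * p / N) = d * ((q - p) * N) / (d * (p * (q - 1) * \<delta>))"
      unfolding a by (simp add: ac_simps)
    then show ?thesis using \<open>0 < d\<close> by simp
  qed
  ultimately have "(1 - a) / q + a / (d * p / N) = (p * E + (q - p) * N) / (p * (q - 1) * \<delta>)"
    by (simp add: add_divide_distrib)
  also have "p * E + (q - p) * N = (p - 1) * \<delta>"
    unfolding \<delta>_def E_def by (simp add: algebra_simps)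
  also have "(p - 1) * \<delta> / (p * (q - 1) * \<delta>) = 1 / (p * (q - 1) / (p - 1))"
    using \<open>0 < \<delta>\<close> by simp
  finally show "1 / (p * (q - 1) / (p - 1)) = (1 - a) / q + a / (d * p / N)"
    by (rule sym)
qed

theorem theorem3p2:
  fixes s p q \<alpha>1 \<alpha>2 C :: real
    and u :: "'a::euclidean_space \<Rightarrow> real"
  defines "d \<equiv> real DIM('a)"
  defines "\<alpha> \<equiv> \<alpha>1 + \<alpha>2"
  assumes hp: "p > 1" and hs: "0 < s" "s < 1"
    and ha1: "- d < \<alpha>1 * p" "\<alpha>1 * p < s * p"
    and ha2: "- d < \<alpha>2 * p" "\<alpha>2 * p < s * p"
    and ha: "0 \<le> \<alpha> * p" "\<alpha> * p < s * p" "s * p - \<alpha> * p < d"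
    and hq: "p < q" "q < p * (d - s + \<alpha>) / (d - s * p + \<alpha> * p)"
    and hC: "C > 0"
    and sob: "\<forall>v::'a \<Rightarrow> real\<in>W_space s p \<alpha>1 \<alpha>2.
                 Lp_int (d * p / (d - s * p + \<alpha> * p)) v < \<infinity> \<and>
                 Lp_norm (d * p / (d - s * p + \<alpha> * p)) v
                   \<le> C powr (1 / p) * gagliardo_seminorm s p \<alpha>1 \<alpha>2 v"
    and hu: "u \<in> D_space s p q \<alpha>1 \<alpha>2"
  shows "let r = p * (q - 1) / (p - 1);
             a = d * (q - p) / ((q - 1) * (d * p - (d - s * p + \<alpha> * p) * q))
         in Lp_int r u < \<infinity> \<and>
            Lp_norm r u \<le> C powr (a / p) * gagliardo_seminorm s p \<alpha>1 \<alpha>2 u powr a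
                            * Lp_norm q u powr (1 - a)"
proof -
  define N where "N = d - s * p + \<alpha> * p"
  define r where "r = p * (q - 1) / (p - 1)"
  define a where "a = d * (q - p) / ((q - 1) * (d * p - N * q))"
  have "0 < N" "N < d" "q * N < d * (p - 1) + N"
    using ha hp hq(2) unfolding N_def by (auto simp: field_simps)
  then have a: "0 < a" "a < 1" "1 / r = (1 - a) / q + a / (d * p / N)"
    using sobolev_interpolation_exponent[OF hp hq(1)] unfolding a_def r_def by auto
  from hu have "u \<in> W_space s p \<alpha>1 \<alpha>2" "in_Lp q u"
    unfolding D_space_def by auto
  with sob have sobolev: "Lp_int (d * p / N) u < \<infinity>"
      "Lp_norm (d * p / N) u \<le> C powr (1 / p) * gagliardo_seminorm s p \<alpha>1 \<alpha>2 u"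
    unfolding N_def by auto
  have "0 < q" "0 < d * p / N"
    using hp hq(1) \<open>0 < N\<close> unfolding d_def by auto
  note interpolation = Lp_norm_interpolation[OF _ this less_imp_le[OF a(1)] less_imp_le[OF a(2)] a(3)]
  have "Lp_norm r u \<le> Lp_norm q u powr (1 - a) * Lp_norm (d * p / N) u powr a"
    using interpolation \<open>in_Lp q u\<close> sobolev(1) unfolding in_Lp_def by blast
  also have "\<dots> \<le> Lp_norm q u powr (1 - a) * (C powr (1 / p) * gagliardo_seminorm s p \<alpha>1 \<alpha>2 u) powr a"
    using sobolev(2) a by (intro mult_left_mono powr_mono2) (auto simp: Lp_norm_def)
  also have "\<dots> = C powr (a / p) * gagliardo_seminorm s p \<alpha>1 \<alpha>2 u powr a * Lp_norm q u powr (1 - a)"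
    using hC by (simp add: powr_mult powr_powr gagliardo_seminorm_def mult.commute)
  finally show ?thesis
    using interpolation \<open>in_Lp q u\<close> sobolev(1)
    unfolding Let_def r_def[symmetric] a_def[symmetric] N_def[symmetric] in_Lp_def by auto
qed

end
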